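(* Let $m,n$ be positive integers and let $s:\mathbb{R}\to\mathbb{R}$ be a spline of degree $m$ whose knots are exactly $\alpha_0<\alpha_1<\dots<\alpha_n$. Suppose that $\alpha_0$ and $\alpha_n$ are $s$-separated zeros of $s$ of order $\geq m$, i.e. $s$ is non-constant on $[\alpha_0,\alpha_n]$ and $s^{(j)}(\alpha_0)=s^{(j)}(\alpha_n)=0$ for all $j=0,1,\dots,m-1$. Then (i) $n\geq m+1$, and (ii) $s$ has at most $n-m-1$ separated zeros in the open interval $]\alpha_0,\alpha_n[$.
   Context: A spline of degree $m$ (with finitely many knots) is a function $s\in C^{m-1}(\mathbb{R},\mathbb{R})$ for which there are finitely many points such that on each interval between consecutive such points, and on the two unbounded complementary intervals, $s$ coincides with a polynomial of degree at most $m$. The knots of $s$ are the points at which $s$ is not $C^\infty$ (in any neighbourhood); the intervals between consecutive knots are the polynomiality domains. For a function $f$ and reals $a<b$, the points $a,b$ are $f$-separated if $f$ is non-constant on $[a,b]$; a strictly increasing finite family of points is $f$-separated if every two consecutive points are $f$-separated. "$s$ has at most $k$ separated zeros in a set $I$" means that every $s$-separated family of zeros of $s$ contained in $I$ has at most $k$ elements. The order of a zero $z$ of $f\in C^{m-1}$ is $\min(\{j\in\{0,\dots,m-1\}: f^{(j)}(z)\neq 0\}\cup\{m\})$. *)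

theory Defs
  imports "HOL-Analysis.Analysis" "HOL-Computational_Algebra.Polynomial"
begin

definition C_on :: "nat \<Rightarrow> real set \<Rightarrow> (real \<Rightarrow> real) \<Rightarrow> bool" where
  "C_on k S f \<longleftrightarrow>
     (\<forall>j<k. \<forall>x\<in>S. ((deriv ^^ j) f has_real_derivative (deriv ^^ Suc j) f x) (at x))
     \<and> continuous_on S ((deriv ^^ k) f)"

text \<open>Spline of degree m with finitely many knots: s in C^(m-1)(R) and there is a finite
  set of break points such that on every open interval avoiding them s is a polynomial
  of degree at most m (this covers the intervals between consecutive points and the two
  unbounded intervals).\<close>
definition spline :: "nat \<Rightarrow> (real \<Rightarrow> real) \<Rightarrow> bool" where
  "spline m s \<longleftrightarrow> C_on (m - 1) UNIV s \<and>
     (\<exists>P. finite P \<and> (\<forall>a b. a < b \<longrightarrow> {a<..<b} \<inter> P = {} \<longrightarrow>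
        (\<exists>p :: real poly. degree p \<le> m \<and> (\<forall>x\<in>{a<..<b}. s x = poly p x))))"

definition knots :: "(real \<Rightarrow> real) \<Rightarrow> real set" where
  "knots s = {x. \<not> (\<exists>e>0. \<forall>k. C_on k (ball x e) s)}"

definition separated :: "(real \<Rightarrow> real) \<Rightarrow> real \<Rightarrow> real \<Rightarrow> bool" where
  "separated f a b \<longleftrightarrow> a < b \<and> (\<exists>x\<in>{a..b}. \<exists>y\<in>{a..b}. f x \<noteq> f y)"

definition separated_family :: "(real \<Rightarrow> real) \<Rightarrow> real list \<Rightarrow> bool" where
  "separated_family f zs \<longleftrightarrow> sorted_wrt (<) zs \<and>
     (\<forall>i. Suc i < length zs \<longrightarrow> separated f (zs ! i) (zs ! Suc i))"

definition at_most_sep_zeros :: "(real \<Rightarrow> real) \<Rightarrow> nat \<Rightarrow> real set \<Rightarrow> bool" where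
  "at_most_sep_zeros s k I \<longleftrightarrow>
     (\<forall>zs. separated_family s zs \<longrightarrow> set zs \<subseteq> I \<longrightarrow> (\<forall>z\<in>set zs. s z = 0)
        \<longrightarrow> length zs \<le> k)"

end

theory Submission
  imports Defs
begin

text \<open>Induction on the degree. For a continuous piecewise linear function, every gap between
  two consecutive separated zeros contains a knot, since a linear function with two zeros
  vanishes. In higher degree, Rolle's theorem puts a zero of the derivative strictly inside
  each gap, at a point where the function itself does not vanish; this keeps the new zeros,
  together with the endpoints, separated for the derivative, which is a spline of one degree
  less with the same knots and zeros of one order less at the endpoints. Each differentiation
  adds one zero, so k separated interior zeros force k + m interior knots, i.e. n - 1 \<ge> k + m.
  If the function vanishes identically between an endpoint and the nearest interior zero, this
  flat stretch extends up to the next knot, which is then a zero of full order; restarting from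
  that knot costs one knot and at most one zero.\<close>

lemma deriv_poly: "deriv (poly p) = poly (pderiv p)"
  by (rule ext, rule DERIV_imp_deriv) (rule poly_DERIV)

lemma higher_deriv_poly: "(deriv ^^ j) (poly p) = poly ((pderiv ^^ j) p)"
  by (induction j) (auto simp: deriv_poly)

lemma higher_deriv_Suc: "(deriv ^^ j) (deriv f) = (deriv ^^ Suc j) f"
  by (metis funpow_Suc_right comp_apply)

lemma higher_deriv_eq_on_open:
  assumes "open S" "\<forall>y\<in>S. f y = g y" "x \<in> S"
  shows "(deriv ^^ j) f x = (deriv ^^ j) g x"
proof (rule higher_deriv_cong_ev)
  have "eventually (\<lambda>y. y \<in> S) (nhds x)"
    using assms(1,3) by (rule eventually_nhds_in_open)
  then show "eventually (\<lambda>y. f y = g y) (nhds x)"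
    by (rule eventually_mono) (use assms(2) in blast)
qed simp

lemma poly_eqI_higher_pderivs:
  fixes p q :: "real poly"
  assumes "\<forall>j. poly ((pderiv ^^ j) p) x = poly ((pderiv ^^ j) q) x"
  shows "p = q"
proof -
  have zero: "r = 0" if "\<forall>j. poly ((pderiv ^^ j) r) x = 0" for r :: "real poly"
    using that
  proof (induction "degree r" arbitrary: r rule: less_induct)
    case less
    show ?case
    proof (cases "degree r = 0")
      case True
      then obtain c where "r = [:c:]" by (metis degree_eq_zeroE)
      with less.prems[rule_format, of 0] show ?thesis by simp
    next
      case False
      have "\<forall>j. poly ((pderiv ^^ j) (pderiv r)) x = 0"
        using less.prems by (metis funpow_Suc_right comp_apply)
      then have "pderiv r = 0" using less.hyps False by (simp add: degree_pderiv)
      then show ?thesis using False pderiv_eq_0_iff by metis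
    qed
  qed
  have "(pderiv ^^ j) (p - q) = (pderiv ^^ j) p - (pderiv ^^ j) q" for j
    by (induction j) (auto simp: pderiv_diff)
  then have "p - q = 0"
    using assms by (intro zero) simp
  then show ?thesis by simp
qed

lemma poly_eq_0_if_zero_on_interval:
  fixes p :: "real poly"
  assumes "u < v" "\<forall>x\<in>{u<..<v}. poly p x = 0"
  shows "p = 0"
proof (rule ccontr)
  assume "p \<noteq> 0"
  then have "finite {x. poly p x = 0}" by (rule poly_roots_finite)
  moreover have "{u<..<v} \<subseteq> {x. poly p x = 0}" using assms(2) by auto
  ultimately show False using infinite_Ioo[OF assms(1)] finite_subset by blast
qed

lemma isCont_eq_on_closure:
  fixes g h :: "real \<Rightarrow> real"
  assumes "isCont g x" "isCont h x" "x \<in> closure S" "\<forall>y\<in>S. g y = h y"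
  shows "g x = h x"
proof -
  obtain \<sigma> where \<sigma>: "\<forall>n. \<sigma> n \<in> S" "\<sigma> \<longlonglongrightarrow> x"
    using assms(3) closure_sequential by blast
  have "(\<lambda>n. g (\<sigma> n)) \<longlonglongrightarrow> g x" "(\<lambda>n. g (\<sigma> n)) \<longlonglongrightarrow> h x"
    using isCont_tendsto_compose[OF assms(1) \<sigma>(2)] isCont_tendsto_compose[OF assms(2) \<sigma>(2)]
      \<sigma>(1) assms(4) by simp_all
  then show ?thesis by (rule LIMSEQ_unique)
qed

lemma continuous_eq_on_closed_interval:
  fixes g h :: "real \<Rightarrow> real"
  assumes "continuous_on UNIV g" "continuous_on UNIV h" "u < v" "\<forall>y\<in>{u<..<v}. g y = h y"
  shows "\<forall>x\<in>{u..v}. g x = h x"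
  using isCont_eq_on_closure[where g=g and h=h and S="{u<..<v}"] assms
  by (simp add: continuous_on_eq_continuous_at)

lemma C_on_deriv: "C_on (Suc k) S f \<Longrightarrow> C_on k S (deriv f)"
  unfolding C_on_def higher_deriv_Suc by auto

lemma C_on_has_deriv: "C_on (Suc k) S f \<Longrightarrow> x \<in> S \<Longrightarrow> (f has_real_derivative deriv f x) (at x)"
  unfolding C_on_def by (metis funpow_0 funpow_Suc_right comp_apply zero_less_Suc)

lemma C_on_continuous_higher_deriv:
  assumes "C_on k UNIV f" "j \<le> k"
  shows "continuous_on UNIV ((deriv ^^ j) f)"
proof (cases "j = k")
  case True
  then show ?thesis using assms(1) by (simp add: C_on_def)
next
  case False
  then have "\<forall>x. ((deriv ^^ j) f has_real_derivative (deriv ^^ Suc j) f x) (at x)"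
    using assms unfolding C_on_def by simp
  then show ?thesis by (meson DERIV_isCont continuous_at_imp_continuous_on)
qed

lemma C_on_isCont_higher_deriv:
  assumes "\<forall>k. C_on k S f" "open S" "x \<in> S"
  shows "isCont ((deriv ^^ j) f) x"
proof -
  have "((deriv ^^ j) f has_real_derivative (deriv ^^ Suc j) f x) (at x)"
    using assms(1,3) unfolding C_on_def by (meson lessI)
  then show ?thesis by (rule DERIV_isCont)
qed

lemma separated_mono: "separated f a b \<Longrightarrow> c \<le> a \<Longrightarrow> b \<le> d \<Longrightarrow> separated f c d"
  unfolding separated_def by (meson atLeastAtMost_iff order.trans less_le_trans le_less_trans)

lemma separated_if_neq: "u < v \<Longrightarrow> f u \<noteq> f v \<Longrightarrow> separated f u v"
  unfolding separated_def by (metis atLeastAtMost_iff less_imp_le order_refl)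

lemma transp_separated: "transp (separated f)"
  by (rule transpI) (meson separated_def separated_mono order.refl less_imp_le)

lemma separated_family_iff_sorted_wrt: "separated_family f zs \<longleftrightarrow> sorted_wrt (separated f) zs"
proof -
  have lt: "transp ((<) :: real \<Rightarrow> real \<Rightarrow> bool)" by (auto simp: transp_def)
  have "separated_family f zs \<longleftrightarrow> (\<forall>i. Suc i < length zs \<longrightarrow> separated f (zs!i) (zs!Suc i))"
    unfolding separated_family_def sorted_wrt_iff_nth_Suc_transp[OF lt] by (auto simp: separated_def)
  then show ?thesis by (simp add: sorted_wrt_iff_nth_Suc_transp[OF transp_separated])
qed

lemma not_separated_iff:
  assumes "a \<le> b"
  shows "\<not> separated f a b \<longleftrightarrow> (\<forall>x\<in>{a..b}. f x = f a)"
proof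
  assume ns: "\<not> separated f a b"
  show "\<forall>x\<in>{a..b}. f x = f a"
  proof (cases "a < b")
    case True
    with ns have const: "\<forall>x\<in>{a..b}. \<forall>y\<in>{a..b}. f x = f y" unfolding separated_def by blast
    have "a \<in> {a..b}" using assms by simp
    with const show ?thesis by blast
  next
    case False
    then show ?thesis using assms by simp
  qed
next
  assume const: "\<forall>x\<in>{a..b}. f x = f a"
  show "\<not> separated f a b"
  proof
    assume "separated f a b"
    then obtain x y where "x \<in> {a..b}" "y \<in> {a..b}" "f x \<noteq> f y"
      unfolding separated_def by blast
    with const show False by metis
  qed
qed

lemma separated_split:
  assumes "separated f a b" "c \<in> {a..b}"
  shows "separated f a c \<or> separated f c b"
proof (rule ccontr)
  assume ns: "\<not> ?thesis"
  have ac: "a \<le> c" "c \<le> b" using assms(2) by auto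
  have left: "\<forall>x\<in>{a..c}. f x = f a"
    using ns not_separated_iff[OF ac(1)] by blast
  have right: "\<forall>x\<in>{c..b}. f x = f c"
    using ns not_separated_iff[OF ac(2)] by blast
  have "f c = f a" using left ac by (meson atLeastAtMost_iff order_refl)
  have "\<forall>x\<in>{a..b}. f x = f a"
  proof
    fix x assume "x \<in> {a..b}"
    then consider "x \<in> {a..c}" | "x \<in> {c..b}" by fastforce
    then show "f x = f a"
    proof cases
      case 2
      with right have "f x = f c" by blast
      with \<open>f c = f a\<close> show ?thesis by simp
    qed (use left in blast)
  qed
  then have "\<not> separated f a b" using not_separated_iff[of a b f] order.trans[OF ac] by blast
  with assms(1) show False by contradiction
qed

lemma sorted_wrt_Cons_snoc:
  assumes "transp R" "xs \<noteq> []"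
  shows "sorted_wrt R (a # xs @ [b]) \<longleftrightarrow> R a (hd xs) \<and> sorted_wrt R xs \<and> R (last xs) b"
  using assms(2)
proof (induction xs arbitrary: a)
  case (Cons x xs)
  show ?case
  proof (cases xs)
    case Nil
    then show ?thesis using assms(1) by (auto dest: transpD)
  next
    case (Cons y ys)
    have "sorted_wrt R (a # x # xs @ [b]) \<longleftrightarrow> R a x \<and> sorted_wrt R (x # xs @ [b])"
      by (rule sorted_wrt2[OF assms(1)])
    also have "\<dots> \<longleftrightarrow> R a x \<and> R x y \<and> sorted_wrt R xs \<and> R (last xs) b"
      using Cons.IH[of x] Cons by simp
    also have "\<dots> \<longleftrightarrow> R a x \<and> sorted_wrt R (x # xs) \<and> R (last xs) b"
      unfolding Cons sorted_wrt2[OF assms(1)] by blast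
    finally show ?thesis using Cons by simp
  qed
qed simp

lemma length_le_filter_outside_constant_interval:
  assumes "sorted_wrt (separated f) zs" "\<forall>x\<in>{c..d}. f x = f c"
  shows "length zs \<le> length (filter (\<lambda>z. z \<notin> {c..d}) zs) + 1"
proof -
  have "length (filter (\<lambda>z. z \<in> {c..d}) zs) \<le> 1"
  proof (rule ccontr)
    assume "\<not> ?thesis"
    then obtain u v ys where uv: "filter (\<lambda>z. z \<in> {c..d}) zs = u # v # ys"
      by (cases "filter (\<lambda>z. z \<in> {c..d}) zs"; cases "tl (filter (\<lambda>z. z \<in> {c..d}) zs)") auto
    then have "separated f u v"
      using sorted_wrt_filter[OF assms(1), of "\<lambda>z. z \<in> {c..d}"] by simp
    then obtain x y where xy: "x \<in> {u..v}" "y \<in> {u..v}" "f x \<noteq> f y"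
      unfolding separated_def by blast
    have "u \<in> {c..d}" "v \<in> {c..d}"
      using arg_cong[OF uv, of set] by auto
    then have "x \<in> {c..d}" "y \<in> {c..d}"
      using xy(1,2) by auto
    then show False using xy(3) assms(2) by metis
  qed
  then show ?thesis using sum_length_filter_compl[of "\<lambda>z. z \<in> {c..d}" zs] by linarith
qed

definition piecewise_poly :: "nat \<Rightarrow> (real \<Rightarrow> real) \<Rightarrow> real \<Rightarrow> real \<Rightarrow> real set \<Rightarrow> bool" where
  "piecewise_poly m f a b K \<longleftrightarrow>
     (\<forall>c d. a \<le> c \<longrightarrow> c < d \<longrightarrow> d \<le> b \<longrightarrow> {c<..<d} \<inter> K = {} \<longrightarrow>
        (\<exists>p :: real poly. degree p \<le> m \<and> (\<forall>x\<in>{c<..<d}. f x = poly p x)))"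

definition vanishes_to_order :: "nat \<Rightarrow> (real \<Rightarrow> real) \<Rightarrow> real \<Rightarrow> bool" where
  "vanishes_to_order m f a \<longleftrightarrow> (\<forall>j<m. (deriv ^^ j) f a = 0)"

lemma piecewise_poly_deriv:
  assumes "piecewise_poly (Suc m) f a b K"
  shows "piecewise_poly m (deriv f) a b K"
  unfolding piecewise_poly_def
proof (intro allI impI)
  fix c d assume cd: "a \<le> c" "c < d" "d \<le> b" "{c<..<d} \<inter> K = {}"
  then obtain p where p: "degree p \<le> Suc m" "\<forall>x\<in>{c<..<d}. f x = poly p x"
    using assms unfolding piecewise_poly_def by blast
  have "\<forall>x\<in>{c<..<d}. deriv f x = poly (pderiv p) x"
    using higher_deriv_eq_on_open[of "{c<..<d}" f "poly p" _ 1] p(2) by (auto simp: deriv_poly)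
  moreover have "degree (pderiv p) \<le> m"
    using p(1) by (simp add: degree_pderiv)
  ultimately show "\<exists>p :: real poly. degree p \<le> m \<and> (\<forall>x\<in>{c<..<d}. deriv f x = poly p x)"
    by blast
qed

lemma piecewise_poly_subinterval:
  assumes "piecewise_poly m f a b K" "a \<le> a'" "b' \<le> b" "K \<inter> {a'<..<b'} \<subseteq> K'"
  shows "piecewise_poly m f a' b' K'"
  unfolding piecewise_poly_def
proof (intro allI impI)
  fix c d assume cd: "a' \<le> c" "c < d" "d \<le> b'" "{c<..<d} \<inter> K' = {}"
  then have "{c<..<d} \<inter> K = {}" using assms(4) by fastforce
  then show "\<exists>p :: real poly. degree p \<le> m \<and> (\<forall>x\<in>{c<..<d}. f x = poly p x)"
    using assms(1-3) cd unfolding piecewise_poly_def by (meson order.trans)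
qed

lemma poly_pieces_eq_at_non_knot:
  assumes "x \<notin> knots s" "c < x" "x < d"
    and "\<forall>y\<in>{c<..<x}. s y = poly p y" "\<forall>y\<in>{x<..<d}. s y = poly q y"
  shows "p = q \<and> s x = poly p x"
proof -
  obtain e where e: "e > 0" "\<forall>k. C_on k (ball x e) s"
    using assms(1) unfolding knots_def by auto
  have piece: "(deriv ^^ j) s x = poly ((pderiv ^^ j) r) x"
    if "open S" "x \<in> closure S" "\<forall>y\<in>S. s y = poly r y" for S r j
  proof (rule isCont_eq_on_closure[OF _ _ that(2)])
    show "isCont ((deriv ^^ j) s) x"
      using C_on_isCont_higher_deriv[OF e(2)] e(1) by simp
    show "\<forall>y\<in>S. (deriv ^^ j) s y = poly ((pderiv ^^ j) r) y"
      using higher_deriv_eq_on_open[OF that(1,3)] by (simp add: higher_deriv_poly)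
  qed simp
  have "(deriv ^^ j) s x = poly ((pderiv ^^ j) p) x" for j
    using piece[of "{c<..<x}"] assms(2,4) by simp
  moreover have "(deriv ^^ j) s x = poly ((pderiv ^^ j) q) x" for j
    using piece[of "{x<..<d}"] assms(3,5) by simp
  ultimately show ?thesis
    using poly_eqI_higher_pderivs[of p x q] by (metis funpow_0)
qed

lemma spline_poly_between_knots:
  assumes "spline m s" "c < d" "{c<..<d} \<inter> knots s = {}"
  shows "\<exists>p :: real poly. degree p \<le> m \<and> (\<forall>x\<in>{c<..<d}. s x = poly p x)"
proof -
  obtain P where fin: "finite P" and pieces: "\<And>a b. a < b \<Longrightarrow> {a<..<b} \<inter> P = {} \<Longrightarrow>
      \<exists>p :: real poly. degree p \<le> m \<and> (\<forall>x\<in>{a<..<b}. s x = poly p x)"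
    using assms(1) unfolding spline_def by blast
  show ?thesis
    using assms(2,3)
  proof (induction "card (P \<inter> {c<..<d})" arbitrary: d rule: less_induct)
    case less
    show ?case
    proof (cases "P \<inter> {c<..<d} = {}")
      case True
      then show ?thesis using pieces less.prems by (simp add: Int_commute)
    next
      case False
      define x where "x = Max (P \<inter> {c<..<d})"
      have finPcd: "finite (P \<inter> {c<..<d})" using fin by simp
      have x: "x \<in> P \<inter> {c<..<d}" "\<forall>y\<in>P \<inter> {c<..<d}. y \<le> x"
        unfolding x_def using Max_in[OF finPcd False] finPcd by simp_all
      then have cx: "c < x" "x < d" by auto
      have "card (P \<inter> {c<..<x}) < card (P \<inter> {c<..<d})"
        using x(1) cx by (intro psubset_card_mono finPcd) auto
      moreover have "{c<..<x} \<inter> knots s = {}" using less.prems cx by fastforce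
      ultimately obtain p where p: "degree p \<le> m" "\<forall>y\<in>{c<..<x}. s y = poly p y"
        using less.hyps cx by blast
      have "{x<..<d} \<inter> P = {}"
      proof (rule ccontr)
        assume "{x<..<d} \<inter> P \<noteq> {}"
        then obtain y where "y \<in> P" "x < y" "y < d" by auto
        then show False using x(2) cx by (meson Int_iff greaterThanLessThan_iff less_trans not_le)
      qed
      then obtain q where q: "\<forall>y\<in>{x<..<d}. s y = poly q y"
        using pieces cx by blast
      have "x \<notin> knots s" using less.prems cx by auto
      from poly_pieces_eq_at_non_knot[OF this cx p(2) q] have "\<forall>y\<in>{c<..<d}. s y = poly p y"
        using p(2) q by (metis greaterThanLessThan_iff linorder_neqE_linordered_idom)
      then show ?thesis using p(1) by blast
    qed
  qed
qed

lemma spline_piecewise_poly: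
  assumes "spline m s"
  shows "piecewise_poly m s a b (knots s \<inter> {a<..<b})"
  unfolding piecewise_poly_def
proof (intro allI impI)
  fix c d assume cd: "a \<le> c" "c < d" "d \<le> b" "{c<..<d} \<inter> (knots s \<inter> {a<..<b}) = {}"
  then have "{c<..<d} \<inter> knots s = {}" by fastforce
  then show "\<exists>p :: real poly. degree p \<le> m \<and> (\<forall>x\<in>{c<..<d}. s x = poly p x)"
    using spline_poly_between_knots[OF assms cd(2)] by blast
qed

lemma vanishes_to_order_deriv: "vanishes_to_order (Suc m) f a \<Longrightarrow> vanishes_to_order m (deriv f) a"
  unfolding vanishes_to_order_def by (metis higher_deriv_Suc Suc_mono)

lemma vanishes_to_order_at_ends_of_zero_interval:
  assumes "C_on k UNIV f" "u < v" "\<forall>x\<in>{u<..<v}. f x = 0"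
  shows "vanishes_to_order (Suc k) f u \<and> vanishes_to_order (Suc k) f v"
proof -
  have "(deriv ^^ j) f x = 0" if "j \<le> k" "x \<in> {u..v}" for j x
  proof -
    have "\<forall>y\<in>{u<..<v}. (deriv ^^ j) f y = (deriv ^^ j) (\<lambda>_. 0) y"
      using higher_deriv_eq_on_open[of "{u<..<v}" f "\<lambda>_. 0"] assms(3) by auto
    moreover have "(deriv ^^ j) (\<lambda>_. 0 :: real) = (\<lambda>_. 0)"
      by (induction j) simp_all
    ultimately have "\<forall>y\<in>{u<..<v}. (deriv ^^ j) f y = 0" by simp
    then have "\<forall>y\<in>{u..v}. (deriv ^^ j) f y = 0"
      by (rule continuous_eq_on_closed_interval[OF C_on_continuous_higher_deriv[OF assms(1) that(1)]
            continuous_on_const assms(2)])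
    then show ?thesis using that(2) by blast
  qed
  then show ?thesis
    unfolding vanishes_to_order_def using assms(2) by auto
qed

lemma rolle_nonvanishing:
  assumes f': "\<forall>x. (f has_real_derivative deriv f x) (at x)"
    and "separated f u v" "f u = 0" "f v = 0"
  obtains w where "w \<in> {u<..<v}" "f w \<noteq> 0" "deriv f w = 0"
proof -
  define g where "g x = f x * f x" for x
  have g': "(g has_real_derivative 2 * f x * deriv f x) (at x)" for x
    unfolding g_def using f' by (auto intro!: derivative_eq_intros)
  have uv: "u < v" and "\<exists>y\<in>{u..v}. f y \<noteq> 0"
    using assms(2-3) unfolding separated_def by metis+
  then obtain y where y: "y \<in> {u..v}" "g y > 0"
    unfolding g_def by (metis not_real_square_gt_zero)
  have "continuous_on {u..v} g"
    by (meson DERIV_isCont continuous_at_imp_continuous_on g')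
  then obtain w where w: "w \<in> {u..v}" "\<forall>z\<in>{u..v}. g z \<le> g w"
    using continuous_attains_sup[of "{u..v}" g] uv by auto
  then have "g w > 0" using y by fastforce
  then have fw: "f w \<noteq> 0" and "w \<noteq> u" "w \<noteq> v"
    using assms(3,4) unfolding g_def by auto
  then have wuv: "w \<in> {u<..<v}" using w(1) by auto
  have "2 * f w * deriv f w = 0"
  proof (rule DERIV_local_max[OF g'])
    show "0 < min (w - u) (v - w)" using wuv by simp
    show "\<forall>y. \<bar>w - y\<bar> < min (w - u) (v - w) \<longrightarrow> g y \<le> g w"
      using w(2) by (auto simp: abs_less_iff)
  qed
  with fw wuv that show ?thesis by simp
qed

lemma separated_deriv:
  assumes f': "\<forall>x. (f has_real_derivative deriv f x) (at x)"
    and "separated f u v" "r \<in> {u..v}" "deriv f r = 0"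
  shows "separated (deriv f) u v"
proof (rule ccontr)
  assume "\<not> separated (deriv f) u v"
  moreover have uv: "u < v" using assms(2) by (simp add: separated_def)
  ultimately have "\<forall>x\<in>{u..v}. deriv f x = deriv f u"
    using not_separated_iff by (metis less_imp_le)
  then have "\<forall>x\<in>{u..v}. deriv f x = 0"
    using assms(3,4) by metis
  then have "\<forall>x\<in>{u..v}. f x = f u"
    using DERIV_isconst2[OF uv, of f] f'
    by (metis DERIV_isCont continuous_at_imp_continuous_on atLeastAtMost_iff less_imp_le)
  then show False
    using assms(2) not_separated_iff uv by (metis less_imp_le)
qed

lemma rolle_separated_zeros:
  assumes f': "\<forall>x. (f has_real_derivative deriv f x) (at x)"
  shows "sorted_wrt (separated f) (x # xs) \<Longrightarrow> xs \<noteq> [] \<Longrightarrow> \<forall>z\<in>set (x # xs). f z = 0 \<Longrightarrow>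
    \<exists>ws. length ws = length xs \<and> (\<forall>w\<in>set ws. deriv f w = 0) \<and>
      sorted_wrt (separated (deriv f)) (x # ws @ [last xs])"
proof (induction xs arbitrary: x)
  case (Cons y ys)
  have xy: "separated f x y" and sorted: "sorted_wrt (separated f) (y # ys)"
    using Cons.prems(1) by (simp_all add: sorted_wrt2[OF transp_separated])
  obtain w where w: "w \<in> {x<..<y}" "f w \<noteq> 0" "deriv f w = 0"
    using rolle_nonvanishing[OF f' xy] Cons.prems(3) by auto
  have fxy: "f x = 0" "f y = 0" using Cons.prems(3) by auto
  then have xw0: "separated f x w" and wy0: "separated f w y"
    using w separated_if_neq by auto
  have xw: "separated (deriv f) x w"
    using separated_deriv[OF f' xw0 _ w(3)] w(1) by simp
  have wy: "separated (deriv f) w y"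
    using separated_deriv[OF f' wy0 _ w(3)] w(1) by simp
  show ?case
  proof (cases "ys = []")
    case True
    have "sorted_wrt (separated (deriv f)) [x, w, y]"
      unfolding sorted_wrt2[OF transp_separated] using xw wy by simp
    then show ?thesis
      using True w(3) by (intro exI[of _ "[w]"]) simp
  next
    case False
    then obtain ws' where ws': "length ws' = length ys" "\<forall>w\<in>set ws'. deriv f w = 0"
      and chain: "sorted_wrt (separated (deriv f)) (y # ws' @ [last ys])"
      using Cons.IH[OF sorted] Cons.prems(3) by auto
    obtain v rest where v: "ws' @ [last ys] = v # rest"
      by (cases "ws' @ [last ys]") auto
    have "separated (deriv f) y v" and rest: "sorted_wrt (separated (deriv f)) (v # rest)"
      using chain v by (simp_all add: sorted_wrt2[OF transp_separated])
    then have "y < v" by (simp add: separated_def)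
    then have "separated f w v"
      using wy0 separated_mono by fastforce
    then have "separated (deriv f) w v"
      using separated_deriv[OF f' _ _ w(3)] w(1) \<open>y < v\<close> by simp
    then have "sorted_wrt (separated (deriv f)) (x # w # ws' @ [last ys])"
      unfolding v sorted_wrt2[OF transp_separated] using xw rest by blast
    then show ?thesis
      using ws' w(3) False by (intro exI[of _ "w # ws'"]) (simp del: sorted_wrt.simps)
  qed
qed simp

lemma knot_between_separated_zeros:
  assumes "continuous_on UNIV f" "piecewise_poly 1 f a b K" "a \<le> u" "v \<le> b"
    and "separated f u v" "f u = 0" "f v = 0"
  shows "\<exists>x\<in>K. u < x \<and> x < v"
proof (rule ccontr)
  assume "\<not> ?thesis"
  then have "{u<..<v} \<inter> K = {}" by auto
  moreover have uv: "u < v" using assms(5) by (simp add: separated_def)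
  ultimately obtain p where p: "degree p \<le> 1" "\<forall>x\<in>{u<..<v}. f x = poly p x"
    using assms(2-4) unfolding piecewise_poly_def by blast
  have on_closed: "\<forall>x\<in>{u..v}. f x = poly p x"
    by (rule continuous_eq_on_closed_interval[OF assms(1) _ uv p(2)]) (auto intro: continuous_intros)
  have "p = 0"
  proof (rule ccontr)
    assume "p \<noteq> 0"
    have "{u, v} \<subseteq> {x. poly p x = 0}"
      using on_closed assms(6,7) uv by auto
    then have "card {u, v} \<le> card {x. poly p x = 0}"
      by (rule card_mono[OF poly_roots_finite[OF \<open>p \<noteq> 0\<close>]])
    also have "\<dots> \<le> degree p"
      by (rule card_poly_roots_bound[OF \<open>p \<noteq> 0\<close>])
    finally show False using p(1) uv by simp
  qed
  then show False
    using on_closed assms(5) not_separated_iff[of u v f] uv by simp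
qed

lemma length_le_card_between:
  fixes L :: "'a :: linorder list"
  assumes "finite K" "sorted_wrt (\<lambda>u v. \<exists>x\<in>K. u < x \<and> x < v) L"
  shows "length L \<le> card K + 1"
  using assms
proof (induction L arbitrary: K)
  case (Cons u L)
  show ?case
  proof (cases L)
    case (Cons v L')
    then obtain x where x: "x \<in> K" "u < x" "x < v"
      using Cons.prems(2) by auto
    have "v < y" if "y \<in> set L'" for y
    proof -
      obtain w where "v < w" "w < y" using Cons.prems(2) \<open>L = v # L'\<close> \<open>y \<in> set L'\<close> by auto
      then show "v < y" by (rule less_trans)
    qed
    then have above: "x < y" if "y \<in> set L" for y
      using that x(3) \<open>L = v # L'\<close> by (auto intro: less_trans)
    have "sorted_wrt (\<lambda>u v. \<exists>y\<in>K - {x}. u < y \<and> y < v) L"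
    proof (rule sorted_wrt_mono_rel)
      show "sorted_wrt (\<lambda>u v. \<exists>x\<in>K. u < x \<and> x < v) L" using Cons.prems(2) by simp
      fix y z assume "y \<in> set L" "\<exists>w\<in>K. y < w \<and> w < z"
      then show "\<exists>w\<in>K - {x}. y < w \<and> w < z"
        using above by (metis Diff_iff less_trans order.irrefl singletonD)
    qed
    then have "length L \<le> card (K - {x}) + 1"
      using Cons.IH Cons.prems(1) by blast
    moreover have "card K > 0" using x(1) Cons.prems(1) card_gt_0_iff by blast
    ultimately show ?thesis using x(1) Cons.prems(1) by (simp add: card_Diff_singleton)
  qed simp
qed simp

lemma separated_zeros_bound_chain:
  assumes "C_on k UNIV f" "finite K" "piecewise_poly (Suc k) f a b K"
    and "vanishes_to_order (Suc k) f a" "vanishes_to_order (Suc k) f b"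
    and "sorted_wrt (separated f) (a # zs @ [b])" "\<forall>z\<in>set zs. f z = 0"
  shows "length zs + Suc k \<le> card K"
  using assms
proof (induction k arbitrary: f zs)
  case 0
  have "f a = 0" "f b = 0"
    using "0.prems"(4,5) unfolding vanishes_to_order_def by auto
  then have zeros: "\<forall>z\<in>set (a # zs @ [b]). f z = 0 \<and> a \<le> z \<and> z \<le> b"
    using "0.prems"(6,7) by (auto simp: sorted_wrt_append separated_def)
  have "continuous_on UNIV f"
    using C_on_continuous_higher_deriv[OF "0.prems"(1), of 0] by simp
  moreover have "piecewise_poly 1 f a b K" using "0.prems"(3) by simp
  ultimately have "sorted_wrt (\<lambda>u v. \<exists>x\<in>K. u < x \<and> x < v) (a # zs @ [b])"
    using knot_between_separated_zeros zeros
    by (intro sorted_wrt_mono_rel[OF _ "0.prems"(6)]) auto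
  then show ?case
    using length_le_card_between[OF "0.prems"(2)] by fastforce
next
  case (Suc k)
  have f': "\<forall>x. (f has_real_derivative deriv f x) (at x)"
    using C_on_has_deriv[OF Suc.prems(1)] by simp
  have "f a = 0" "f b = 0"
    using Suc.prems(4,5) unfolding vanishes_to_order_def by auto
  then obtain ws where ws: "length ws = length (zs @ [b])" "\<forall>w\<in>set ws. deriv f w = 0"
    "sorted_wrt (separated (deriv f)) (a # ws @ [b])"
    using rolle_separated_zeros[OF f', of a "zs @ [b]"] Suc.prems(6,7) by auto
  have "length ws + Suc k \<le> card K"
    by (rule Suc.IH[OF C_on_deriv[OF Suc.prems(1)] Suc.prems(2) piecewise_poly_deriv[OF Suc.prems(3)]
          vanishes_to_order_deriv[OF Suc.prems(4)] vanishes_to_order_deriv[OF Suc.prems(5)] ws(3,2)])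
  then show ?case using ws(1) by simp
qed

lemma zero_extends_to_first_knot:
  assumes "continuous_on UNIV f" "piecewise_poly m f a b K" "finite K" "K \<subseteq> {a<..<b}"
    and "separated f a b" "a < z" "\<forall>x\<in>{a..z}. f x = 0"
  obtains \<kappa> where "\<kappa> \<in> K" "\<forall>x\<in>K. \<kappa> \<le> x" "\<forall>x\<in>{a..\<kappa>}. f x = 0"
proof -
  define \<kappa> where "\<kappa> = Min (insert b K)"
  have \<kappa>: "\<kappa> \<in> insert b K" "\<forall>x\<in>insert b K. \<kappa> \<le> x"
    unfolding \<kappa>_def using assms(3) Min_in[of "insert b K"] by auto
  have ab: "a < b" using assms(5) by (simp add: separated_def)
  then have a\<kappa>: "a < \<kappa>" "\<kappa> \<le> b" using \<kappa> assms(4) by auto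
  moreover have "{a<..<\<kappa>} \<inter> K = {}" using \<kappa>(2) by fastforce
  ultimately obtain p where p: "\<forall>x\<in>{a<..<\<kappa>}. f x = poly p x"
    using assms(2) unfolding piecewise_poly_def by blast
  have "\<forall>x\<in>{a<..<min z \<kappa>}. poly p x = 0"
  proof
    fix x assume x: "x \<in> {a<..<min z \<kappa>}"
    then have "f x = poly p x" using p by simp
    moreover have "f x = 0" using x assms(7) by simp
    ultimately show "poly p x = 0" by simp
  qed
  then have "p = 0"
    using poly_eq_0_if_zero_on_interval[of a "min z \<kappa>" p] a\<kappa>(1) assms(6) by simp
  then have zero: "\<forall>x\<in>{a..\<kappa>}. f x = 0"
    using continuous_eq_on_closed_interval[OF assms(1) _ a\<kappa>(1), of "\<lambda>_. 0"] p by auto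
  have "\<kappa> \<noteq> b"
    using zero assms(5) not_separated_iff[of a b f] ab by auto
  then show thesis using that \<kappa> zero by auto
qed

lemma zero_extends_to_last_knot:
  assumes "continuous_on UNIV f" "piecewise_poly m f a b K" "finite K" "K \<subseteq> {a<..<b}"
    and "separated f a b" "z < b" "\<forall>x\<in>{z..b}. f x = 0"
  obtains \<kappa> where "\<kappa> \<in> K" "\<forall>x\<in>K. x \<le> \<kappa>" "\<forall>x\<in>{\<kappa>..b}. f x = 0"
proof -
  define \<kappa> where "\<kappa> = Max (insert a K)"
  have \<kappa>: "\<kappa> \<in> insert a K" "\<forall>x\<in>insert a K. x \<le> \<kappa>"
    unfolding \<kappa>_def using assms(3) Max_in[of "insert a K"] by auto
  have ab: "a < b" using assms(5) by (simp add: separated_def)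
  then have \<kappa>b: "\<kappa> < b" "a \<le> \<kappa>" using \<kappa> assms(4) by auto
  moreover have "{\<kappa><..<b} \<inter> K = {}" using \<kappa>(2) by fastforce
  ultimately obtain p where p: "\<forall>x\<in>{\<kappa><..<b}. f x = poly p x"
    using assms(2) unfolding piecewise_poly_def by blast
  have "\<forall>x\<in>{max z \<kappa><..<b}. poly p x = 0"
  proof
    fix x assume x: "x \<in> {max z \<kappa><..<b}"
    then have "f x = poly p x" using p by simp
    moreover have "f x = 0" using x assms(7) by simp
    ultimately show "poly p x = 0" by simp
  qed
  then have "p = 0"
    using poly_eq_0_if_zero_on_interval[of "max z \<kappa>" b p] \<kappa>b(1) assms(6) by simp
  then have zero: "\<forall>x\<in>{\<kappa>..b}. f x = 0"
    using continuous_eq_on_closed_interval[OF assms(1) _ \<kappa>b(1), of "\<lambda>_. 0"] p by auto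
  have "\<kappa> \<noteq> a"
    using zero assms(5) not_separated_iff[of a b f] ab by auto
  then show thesis using that \<kappa> zero by auto
qed

lemma flat_start_restart:
  assumes "C_on k UNIV f" "piecewise_poly (Suc k) f a b K" "finite K" "K \<subseteq> {a<..<b}"
    and "separated f a b" "a < z" "\<forall>x\<in>{a..z}. f x = 0"
  obtains \<kappa> where "\<kappa> \<in> K" "\<forall>x\<in>{a..\<kappa>}. f x = 0" "separated f \<kappa> b"
    "vanishes_to_order (Suc k) f \<kappa>" "piecewise_poly (Suc k) f \<kappa> b (K - {\<kappa>})" "K - {\<kappa>} \<subseteq> {\<kappa><..<b}"
proof -
  have cont: "continuous_on UNIV f"
    using C_on_continuous_higher_deriv[OF assms(1), of 0] by simp
  obtain \<kappa> where \<kappa>: "\<kappa> \<in> K" "\<forall>x\<in>K. \<kappa> \<le> x" "\<forall>x\<in>{a..\<kappa>}. f x = 0"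
    using zero_extends_to_first_knot[OF cont assms(2-7)] by blast
  have a\<kappa>: "a < \<kappa>" "\<kappa> < b" using \<kappa>(1) assms(4) by auto
  have "\<forall>x\<in>{a..\<kappa>}. f x = f a" using \<kappa>(3) a\<kappa> by simp
  then have "\<not> separated f a \<kappa>" using not_separated_iff a\<kappa>(1) by (meson less_imp_le)
  then have "separated f \<kappa> b"
    using separated_split[OF assms(5), of \<kappa>] a\<kappa> by simp
  moreover have "vanishes_to_order (Suc k) f \<kappa>"
    using vanishes_to_order_at_ends_of_zero_interval[OF assms(1) a\<kappa>(1)] \<kappa>(3) by auto
  moreover have "piecewise_poly (Suc k) f \<kappa> b (K - {\<kappa>})"
    by (rule piecewise_poly_subinterval[OF assms(2)]) (use a\<kappa> in auto)
  moreover have "K - {\<kappa>} \<subseteq> {\<kappa><..<b}" using \<kappa>(2) assms(4) by fastforce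
  ultimately show thesis using that \<kappa>(1,3) by blast
qed

lemma flat_end_restart:
  assumes "C_on k UNIV f" "piecewise_poly (Suc k) f a b K" "finite K" "K \<subseteq> {a<..<b}"
    and "separated f a b" "z < b" "\<forall>x\<in>{z..b}. f x = 0"
  obtains \<kappa> where "\<kappa> \<in> K" "\<forall>x\<in>{\<kappa>..b}. f x = 0" "separated f a \<kappa>"
    "vanishes_to_order (Suc k) f \<kappa>" "piecewise_poly (Suc k) f a \<kappa> (K - {\<kappa>})" "K - {\<kappa>} \<subseteq> {a<..<\<kappa>}"
proof -
  have cont: "continuous_on UNIV f"
    using C_on_continuous_higher_deriv[OF assms(1), of 0] by simp
  obtain \<kappa> where \<kappa>: "\<kappa> \<in> K" "\<forall>x\<in>K. x \<le> \<kappa>" "\<forall>x\<in>{\<kappa>..b}. f x = 0"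
    using zero_extends_to_last_knot[OF cont assms(2-7)] by blast
  have \<kappa>b: "a < \<kappa>" "\<kappa> < b" using \<kappa>(1) assms(4) by auto
  have "\<forall>x\<in>{\<kappa>..b}. f x = f \<kappa>" using \<kappa>(3) \<kappa>b by simp
  then have "\<not> separated f \<kappa> b" using not_separated_iff \<kappa>b(2) by (meson less_imp_le)
  then have "separated f a \<kappa>"
    using separated_split[OF assms(5), of \<kappa>] \<kappa>b by simp
  moreover have "vanishes_to_order (Suc k) f \<kappa>"
    using vanishes_to_order_at_ends_of_zero_interval[OF assms(1) \<kappa>b(2)] \<kappa>(3) by auto
  moreover have "piecewise_poly (Suc k) f a \<kappa> (K - {\<kappa>})"
    by (rule piecewise_poly_subinterval[OF assms(2)]) (use \<kappa>b in auto)
  moreover have "K - {\<kappa>} \<subseteq> {a<..<\<kappa>}" using \<kappa>(2) assms(4) by fastforce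
  ultimately show thesis using that \<kappa>(1,3) by blast
qed

lemma separated_zeros_bound:
  assumes "C_on k UNIV f"
  shows "finite K \<Longrightarrow> K \<subseteq> {a<..<b} \<Longrightarrow> piecewise_poly (Suc k) f a b K \<Longrightarrow>
    vanishes_to_order (Suc k) f a \<Longrightarrow> vanishes_to_order (Suc k) f b \<Longrightarrow> separated f a b \<Longrightarrow>
    sorted_wrt (separated f) zs \<Longrightarrow> set zs \<subseteq> {a<..<b} \<Longrightarrow> \<forall>z\<in>set zs. f z = 0 \<Longrightarrow>
    length zs + Suc k \<le> card K"
proof (induction "card K" arbitrary: a b K zs rule: less_induct)
  case less
  note fin = less.prems(1) and K_ab = less.prems(2) and pw = less.prems(3)
    and van_a = less.prems(4) and van_b = less.prems(5) and ab = less.prems(6)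
    and zs = less.prems(7-9)
  have fab: "f a = 0" "f b = 0"
    using van_a van_b unfolding vanishes_to_order_def by auto
  have remove_knot: "card (K - {\<kappa>}) < card K" "card (K - {\<kappa>}) + 1 = card K" if "\<kappa> \<in> K" for \<kappa>
    using card_Diff1_less[OF fin that] card.remove[OF fin that] by simp_all
  consider (chain) "sorted_wrt (separated f) (a # zs @ [b])"
    | (left) "zs \<noteq> []" "\<not> separated f a (hd zs)"
    | (right) "zs \<noteq> []" "\<not> separated f (last zs) b"
  proof (cases "zs = []")
    case True
    then show ?thesis using that(1) ab by simp
  next
    case False
    then show ?thesis
      using that sorted_wrt_Cons_snoc[OF transp_separated False, where a=a and b=b] zs(1) by blast
  qed
  then show ?case
  proof cases
    case chain
    show ?thesis by (rule separated_zeros_bound_chain[OF assms fin pw van_a van_b chain zs(3)])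
  next
    case left
    have "hd zs \<in> {a<..<b}" using left(1) zs(2) hd_in_set by blast
    then have "\<forall>x\<in>{a..hd zs}. f x = f a"
      using left(2) not_separated_iff[of a "hd zs" f] by (metis greaterThanLessThan_iff less_imp_le)
    with fab have "\<forall>x\<in>{a..hd zs}. f x = 0" by metis
    then obtain \<kappa> where \<kappa>: "\<kappa> \<in> K" "\<forall>x\<in>{a..\<kappa>}. f x = 0" "separated f \<kappa> b"
      "vanishes_to_order (Suc k) f \<kappa>" "piecewise_poly (Suc k) f \<kappa> b (K - {\<kappa>})" "K - {\<kappa>} \<subseteq> {\<kappa><..<b}"
      using flat_start_restart[OF assms pw fin K_ab ab] \<open>hd zs \<in> {a<..<b}\<close> by auto
    let ?zs = "filter (\<lambda>z. z \<notin> {a..\<kappa>}) zs"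
    have "set ?zs \<subseteq> {\<kappa><..<b}" using zs(2) by auto
    then have "length ?zs + Suc k \<le> card (K - {\<kappa>})"
      using less.hyps[OF remove_knot(1)[OF \<kappa>(1)] _ \<kappa>(6,5,4) van_b \<kappa>(3) sorted_wrt_filter[OF zs(1)]]
        fin zs(3) by simp
    moreover have "length zs \<le> length ?zs + 1"
      using length_le_filter_outside_constant_interval[OF zs(1)] \<kappa>(1,2) K_ab by auto
    ultimately show ?thesis using remove_knot(2)[OF \<kappa>(1)] by linarith
  next
    case right
    have "last zs \<in> {a<..<b}" using right(1) zs(2) last_in_set by blast
    then have "\<forall>x\<in>{last zs..b}. f x = f (last zs)"
      using right(2) not_separated_iff[of "last zs" b f] by (metis greaterThanLessThan_iff less_imp_le)
    moreover have "f (last zs) = 0" using right(1) zs(3) last_in_set by blast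
    ultimately have "\<forall>x\<in>{last zs..b}. f x = 0" by metis
    then obtain \<kappa> where \<kappa>: "\<kappa> \<in> K" "\<forall>x\<in>{\<kappa>..b}. f x = 0" "separated f a \<kappa>"
      "vanishes_to_order (Suc k) f \<kappa>" "piecewise_poly (Suc k) f a \<kappa> (K - {\<kappa>})" "K - {\<kappa>} \<subseteq> {a<..<\<kappa>}"
      using flat_end_restart[OF assms pw fin K_ab ab] \<open>last zs \<in> {a<..<b}\<close> by auto
    let ?zs = "filter (\<lambda>z. z \<notin> {\<kappa>..b}) zs"
    have "set ?zs \<subseteq> {a<..<\<kappa>}" using zs(2) by auto
    then have "length ?zs + Suc k \<le> card (K - {\<kappa>})"
      using less.hyps[OF remove_knot(1)[OF \<kappa>(1)] _ \<kappa>(6,5) van_a \<kappa>(4,3) sorted_wrt_filter[OF zs(1)]]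
        fin zs(3) by simp
    moreover have "length zs \<le> length ?zs + 1"
      using length_le_filter_outside_constant_interval[OF zs(1)] \<kappa>(1,2) K_ab by auto
    ultimately show ?thesis using remove_knot(2)[OF \<kappa>(1)] by linarith
  qed
qed

lemma strict_mono_on_image_inner:
  fixes \<alpha> :: "nat \<Rightarrow> 'a :: linorder"
  assumes "strict_mono_on {0..n} \<alpha>"
  shows "\<alpha> ` {0..n} \<inter> {\<alpha> 0<..<\<alpha> n} = \<alpha> ` {1..<n}"
proof
  have mono: "\<alpha> i < \<alpha> j" if "i < j" "j \<le> n" for i j
    using strict_mono_onD[OF assms] that by simp
  show "\<alpha> ` {1..<n} \<subseteq> \<alpha> ` {0..n} \<inter> {\<alpha> 0<..<\<alpha> n}"
  proof
    fix x assume "x \<in> \<alpha> ` {1..<n}"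
    then obtain i where "1 \<le> i" "i < n" "x = \<alpha> i" by auto
    then show "x \<in> \<alpha> ` {0..n} \<inter> {\<alpha> 0<..<\<alpha> n}"
      using mono[of 0 i] mono[of i n] by auto
  qed
  show "\<alpha> ` {0..n} \<inter> {\<alpha> 0<..<\<alpha> n} \<subseteq> \<alpha> ` {1..<n}"
  proof
    fix x assume x: "x \<in> \<alpha> ` {0..n} \<inter> {\<alpha> 0<..<\<alpha> n}"
    then obtain i where i: "i \<le> n" "x = \<alpha> i" by auto
    moreover have "i \<noteq> 0" "i \<noteq> n"
      using x i by (metis IntD2 greaterThanLessThan_iff order.irrefl)+
    ultimately show "x \<in> \<alpha> ` {1..<n}" by auto
  qed
qed

theorem mainTheorem2:
  fixes m n :: nat and s :: "real \<Rightarrow> real" and \<alpha> :: "nat \<Rightarrow> real"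
  assumes "m > 0" and "n > 0"
    and "spline m s"
    and "strict_mono_on {0..n} \<alpha>"
    and "knots s = \<alpha> ` {0..n}"
    and "separated s (\<alpha> 0) (\<alpha> n)"
    and "\<forall>j<m. (deriv ^^ j) s (\<alpha> 0) = 0 \<and> (deriv ^^ j) s (\<alpha> n) = 0"
  shows "n \<ge> m + 1 \<and> at_most_sep_zeros s (n - m - 1) {\<alpha> 0<..<\<alpha> n}"
proof -
  obtain k where m: "m = Suc k" using assms(1) gr0_implies_Suc by blast
  have K: "knots s \<inter> {\<alpha> 0<..<\<alpha> n} = \<alpha> ` {1..<n}"
    using strict_mono_on_image_inner[OF assms(4)] unfolding assms(5) .
  have card: "card (\<alpha> ` {1..<n}) = n - 1"
    using strict_mono_on_imp_inj_on[OF assms(4)] by (subst card_image) (auto intro: inj_on_subset)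
  have C: "C_on k UNIV s" using assms(3) m unfolding spline_def by simp
  have pw: "piecewise_poly (Suc k) s (\<alpha> 0) (\<alpha> n) (\<alpha> ` {1..<n})"
    using spline_piecewise_poly[OF assms(3), of "\<alpha> 0" "\<alpha> n"] unfolding K m .
  have van: "vanishes_to_order (Suc k) s (\<alpha> 0)" "vanishes_to_order (Suc k) s (\<alpha> n)"
    using assms(7) m unfolding vanishes_to_order_def by auto
  have K_sub: "\<alpha> ` {1..<n} \<subseteq> {\<alpha> 0<..<\<alpha> n}" using K by blast
  have bound: "length zs + m \<le> n - 1"
    if "sorted_wrt (separated s) zs" "set zs \<subseteq> {\<alpha> 0<..<\<alpha> n}" "\<forall>z\<in>set zs. s z = 0" for zs
    using separated_zeros_bound[OF C finite_imageI[OF finite_atLeastLessThan] K_sub pw van assms(6) that]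
      card m by simp
  have "m + 1 \<le> n" using bound[of "[]"] assms(1) by simp
  moreover have "at_most_sep_zeros s (n - m - 1) {\<alpha> 0<..<\<alpha> n}"
    unfolding at_most_sep_zeros_def separated_family_iff_sorted_wrt
  proof (intro allI impI)
    fix zs assume "sorted_wrt (separated s) zs" "set zs \<subseteq> {\<alpha> 0<..<\<alpha> n}" "\<forall>z\<in>set zs. s z = 0"
    from bound[OF this] show "length zs \<le> n - m - 1" by linarith
  qed
  ultimately show ?thesis by simp
qed

end
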